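(* If $H$ is an abelian subgroup of $\operatorname{Sym}_n$ and $S=S_n(H)$, with $n\geq 3$, then $SzS$ is a prime ideal of $S$.
   Context: $S_n(H)$ is the monoid with presentation $\langle a_1,\dots,a_n \mid a_1\cdots a_n = a_{\sigma(1)}\cdots a_{\sigma(n)},\ \sigma\in H\rangle$, and $z=a_1a_2\cdots a_n$. An ideal $Q$ of a monoid $S$ is prime if $Q\neq S$ and, for $u,v\in S$, $uSv\subseteq Q$ implies $u\in Q$ or $v\in Q$. *)

theory Defs
  imports "HOL-Algebra.Sym_Groups"
begin

text \<open>The monoid S_n(H) is represented as the free monoid of words over the
alphabet {1..n} (letter i stands for a_i), modulo the congruence generated by
the defining relations. Elements of S_n(H) are congruence classes of words;
subsets of S_n(H) are represented by sets of words closed under the congruence.\<close>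

definition words :: "nat \<Rightarrow> nat list set" where
  "words n = {w. set w \<subseteq> {1..n}}"

definition zword :: "nat \<Rightarrow> nat list" where
  "zword n = [1..<n+1]"

inductive Scong :: "nat \<Rightarrow> (nat \<Rightarrow> nat) set \<Rightarrow> nat list \<Rightarrow> nat list \<Rightarrow> bool"
  for n :: nat and H :: "(nat \<Rightarrow> nat) set" where
  rel: "\<sigma> \<in> H \<Longrightarrow> Scong n H (x @ zword n @ y) (x @ map \<sigma> (zword n) @ y)"
| refl: "Scong n H w w"
| sym: "Scong n H u v \<Longrightarrow> Scong n H v u"
| trans: "Scong n H u v \<Longrightarrow> Scong n H v w \<Longrightarrow> Scong n H u w"

definition SzS :: "nat \<Rightarrow> (nat \<Rightarrow> nat) set \<Rightarrow> nat list set" where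
  "SzS n H = {w \<in> words n. \<exists>u\<in>words n. \<exists>v\<in>words n. Scong n H w (u @ zword n @ v)}"

definition prime_ideal_S :: "nat \<Rightarrow> (nat \<Rightarrow> nat) set \<Rightarrow> nat list set \<Rightarrow> bool" where
  "prime_ideal_S n H Q \<longleftrightarrow>
     Q \<subseteq> words n \<and>
     (\<forall>w\<in>Q. \<forall>w'\<in>words n. Scong n H w w' \<longrightarrow> w' \<in> Q) \<and>
     (\<forall>w\<in>Q. \<forall>u\<in>words n. \<forall>v\<in>words n. u @ w @ v \<in> Q) \<and>
     Q \<noteq> words n \<and>
     (\<forall>u\<in>words n. \<forall>v\<in>words n.
        (\<forall>s\<in>words n. u @ s @ v \<in> Q) \<longrightarrow> u \<in> Q \<or> v \<in> Q)"

end

theory Submission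
  imports Defs "HOL-Library.Sublist"
begin

text \<open>A word lies in S z S exactly when it contains some block \<open>map \<sigma> (zword n)\<close>,
\<open>\<sigma> \<in> H\<close>, as a factor: the defining relations only rewrite such blocks into one another (and
\<open>id \<in> H\<close>), so every other word is alone in its congruence class. The letters of a block are
distinct, so a block occurring in \<open>u @ [last u, hd v] @ v\<close> cannot straddle either of the two
doubled letters; it therefore lies in \<open>u\<close>, in \<open>v\<close>, or in the two-letter middle, and the last is
impossible for \<open>n \<ge> 3\<close>.\<close>

lemma distinct_sublist_doubled_letter:
  assumes "distinct p" and "sublist p (a @ c # c # b)"
  shows "sublist p (a @ [c]) \<or> sublist p (c # b)"
proof -
  have "sublist p ((a @ [c]) @ c # b)" using assms(2) by simp
  then consider "sublist p (a @ [c])" | "sublist p (c # b)"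
    | xs1 xs2 where "p = xs1 @ xs2" "suffix xs1 (a @ [c])" "prefix xs2 (c # b)"
    unfolding sublist_append by blast
  then show ?thesis
  proof cases
    case (3 xs1 xs2)
    show ?thesis
    proof (cases "xs1 = [] \<or> xs2 = []")
      case True
      then show ?thesis using 3 by auto
    next
      case False
      then have "c \<in> set xs1" "c \<in> set xs2" using 3
        by (auto simp: suffix_def prefix_def append_eq_append_conv2 Cons_eq_append_conv)
      then show ?thesis using assms(1) \<open>p = xs1 @ xs2\<close> by auto
    qed
  qed auto
qed

lemma distinct_sublist_bridge:
  assumes "distinct p" "length p \<ge> 3" "u \<noteq> []" "v \<noteq> []"
    and "sublist p (u @ [last u, hd v] @ v)"
  shows "sublist p u \<or> sublist p v"
proof -
  have u: "butlast u @ [last u] = u" and v: "hd v # tl v = v"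
    using assms(3,4) by simp_all
  have "sublist p (butlast u @ last u # last u # hd v # v)"
    using assms(5) u by (metis append.assoc append_Cons append_Nil)
  then have "sublist p u \<or> sublist p ([last u] @ hd v # hd v # tl v)"
    using distinct_sublist_doubled_letter[OF assms(1)] u v by fastforce
  moreover have "\<not> sublist p [last u, hd v]"
    using sublist_length_le assms(2) by fastforce
  ultimately show ?thesis
    using distinct_sublist_doubled_letter[OF assms(1), of "[last u]" "hd v" "tl v"] v by auto
qed

definition has_block :: "nat \<Rightarrow> (nat \<Rightarrow> nat) set \<Rightarrow> nat list \<Rightarrow> bool" where
  "has_block n H w \<longleftrightarrow> (\<exists>\<sigma>\<in>H. sublist (map \<sigma> (zword n)) w)"

lemma words_append_iff [simp]: "a @ b \<in> words n \<longleftrightarrow> a \<in> words n \<and> b \<in> words n"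
  by (auto simp: words_def)

lemma has_block_append_context:
  "has_block n H w \<Longrightarrow> has_block n H (u @ w @ v)"
  unfolding has_block_def by (meson sublist_appendI sublist_order.order.trans)

lemma Scong_has_block_iff:
  assumes "id \<in> H" and "Scong n H a b"
  shows "has_block n H a \<longleftrightarrow> has_block n H b"
  using assms(2)
proof (induction rule: Scong.induct)
  case (rel \<sigma> x y)
  have "sublist (map id (zword n)) (x @ zword n @ y)" by simp
  then show ?case using rel assms(1) unfolding has_block_def by blast
qed simp_all

lemma mem_SzS_iff:
  assumes "id \<in> H"
  shows "w \<in> SzS n H \<longleftrightarrow> w \<in> words n \<and> has_block n H w"
proof
  assume "w \<in> SzS n H"
  then obtain x y where w: "w \<in> words n" "Scong n H w (x @ zword n @ y)"
    unfolding SzS_def by blast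
  have "has_block n H (x @ zword n @ y)"
    using assms unfolding has_block_def by (metis list.map_id sublist_appendI)
  then show "w \<in> words n \<and> has_block n H w"
    using w Scong_has_block_iff[OF assms] by blast
next
  assume w: "w \<in> words n \<and> has_block n H w"
  then obtain \<sigma> x y where "\<sigma> \<in> H" and xy: "w = x @ map \<sigma> (zword n) @ y"
    unfolding has_block_def sublist_def by blast
  then have "Scong n H w (x @ zword n @ y)"
    by (simp add: Scong.rel Scong.sym)
  moreover have "x \<in> words n" "y \<in> words n"
    using w xy by (auto simp: words_def)
  ultimately show "w \<in> SzS n H"
    using w unfolding SzS_def by blast
qed

lemma distinct_block:
  assumes "\<sigma> permutes {1..n}"
  shows "distinct (map \<sigma> (zword n))"
proof -
  have "set (zword n) \<subseteq> {1..n}" by (auto simp: zword_def)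
  then have "inj_on \<sigma> (set (zword n))"
    using permutes_inj_on[OF assms] inj_on_subset by blast
  moreover have "distinct (zword n)" by (simp add: zword_def)
  ultimately show ?thesis by (simp add: distinct_map)
qed

lemma has_block_bridge:
  assumes "\<forall>\<sigma>\<in>H. \<sigma> permutes {1..n}" and "n \<ge> 3"
    and "u \<noteq> []" "v \<noteq> []" "has_block n H (u @ [last u, hd v] @ v)"
  shows "has_block n H u \<or> has_block n H v"
proof -
  obtain \<sigma> where "\<sigma> \<in> H" and "sublist (map \<sigma> (zword n)) (u @ [last u, hd v] @ v)"
    using assms(5) unfolding has_block_def by blast
  moreover have "distinct (map \<sigma> (zword n))"
    using distinct_block assms(1) \<open>\<sigma> \<in> H\<close> by blast
  moreover have "length (map \<sigma> (zword n)) \<ge> 3"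
    using assms(2) by (simp add: zword_def)
  ultimately show ?thesis
    using distinct_sublist_bridge assms(3,4) unfolding has_block_def by blast
qed

lemma prime_ideal_SzS:
  assumes "id \<in> H" and perm: "\<forall>\<sigma>\<in>H. \<sigma> permutes {1..n}" and "n \<ge> 3"
  shows "prime_ideal_S n H (SzS n H)"
  unfolding prime_ideal_S_def
proof (intro conjI ballI impI)
  note SzS = mem_SzS_iff[OF assms(1)]
  show "SzS n H \<subseteq> words n" by (auto simp: SzS)
  show "w' \<in> SzS n H" if "w \<in> SzS n H" "w' \<in> words n" "Scong n H w w'" for w w'
    using that Scong_has_block_iff[OF assms(1)] by (auto simp: SzS)
  show "u @ w @ v \<in> SzS n H" if "w \<in> SzS n H" "u \<in> words n" "v \<in> words n" for w u v
    using that has_block_append_context by (auto simp: SzS)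
  have "\<not> has_block n H []"
    using assms(3) by (auto simp: has_block_def zword_def)
  then show "SzS n H \<noteq> words n"
    by (auto simp: SzS words_def)
  show "u \<in> SzS n H \<or> v \<in> SzS n H"
    if u: "u \<in> words n" and v: "v \<in> words n" and uv: "\<forall>s\<in>words n. u @ s @ v \<in> SzS n H" for u v
  proof (cases "u = [] \<or> v = []")
    case True
    have "[] \<in> words n" by (simp add: words_def)
    then have "has_block n H (u @ v)" using uv by (auto simp: SzS)
    then show ?thesis using True u v by (auto simp: SzS)
  next
    case False
    then have "last u \<in> set u" "hd v \<in> set v" by simp_all
    then have "[last u, hd v] \<in> words n"
      using u v by (auto simp: words_def)
    then have "has_block n H (u @ [last u, hd v] @ v)"
      using uv by (auto simp: SzS)
    then show ?thesis
      using has_block_bridge[OF perm assms(3)] False u v by (auto simp: SzS)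
  qed
qed

theorem lemma4p2:
  fixes n :: nat and H :: "(nat \<Rightarrow> nat) set"
  assumes "subgroup H (sym_group n)"
    and "\<forall>\<sigma>\<in>H. \<forall>\<tau>\<in>H. \<sigma> \<circ> \<tau> = \<tau> \<circ> \<sigma>"
    and "n \<ge> 3"
  shows "prime_ideal_S n H (SzS n H)"
proof (rule prime_ideal_SzS)
  show "id \<in> H"
    using subgroup.one_closed[OF assms(1)] by (simp add: sym_group_one)
  show "\<forall>\<sigma>\<in>H. \<sigma> permutes {1..n}"
    using subgroup.subset[OF assms(1)] by (auto simp: sym_group_carrier)
qed (fact assms(3))

end
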